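(* Let $X$ be an infinite compact metrizable space and $h\colon X\to X$ a minimal homeomorphism. For any $\varepsilon>0$ and any closed universally null set $F\subset X$, there is a non-empty open set $E\subset X$ such that $F\subset E$ and $\mu(E)<\varepsilon$ for all $\mu\in M_h(X)$.
   Context: $M_h(X)$ denotes the set of $h$-invariant Borel probability measures on $X$. A Borel set $E\subset X$ is universally null if $\mu(E)=0$ for all $\mu\in M_h(X)$. *)

theory Defs
  imports "HOL-Probability.Probability"
begin

definition minimal_map :: "('a::topological_space \<Rightarrow> 'a) \<Rightarrow> bool" where
  "minimal_map h \<longleftrightarrow> (\<forall>A. closed A \<and> h ` A = A \<longrightarrow> A = {} \<or> A = UNIV)"

definition invariant_measures :: "('a::topological_space \<Rightarrow> 'a) \<Rightarrow> 'a measure set" where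
  "invariant_measures h =
     {\<mu>. sets \<mu> = sets borel \<and> prob_space \<mu> \<and>
          (\<forall>B\<in>sets borel. emeasure \<mu> (h -` B) = emeasure \<mu> B)}"

definition universally_null :: "('a::topological_space \<Rightarrow> 'a) \<Rightarrow> 'a set \<Rightarrow> bool" where
  "universally_null h E \<longleftrightarrow> E \<in> sets borel \<and> (\<forall>\<mu>\<in>invariant_measures h. emeasure \<mu> E = 0)"

end

theory Submission
  imports Defs
begin

(* Suppose every open neighbourhood of F had measure at least \<epsilon> for some invariant measure.
   Choosing such measures \<mu>\<^sub>n for the 1/(n+1)-neighbourhoods of F, compactness of the Borel
   probability measures on a compact metric space gives a weakly convergent subsequence; its
   limit is invariant because h is continuous, and it gives F measure at least \<epsilon> because F is
   closed, contradicting universal nullness. The compactness is obtained from Helly's selection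
   theorem on the real line, by coding X Borel-injectively into [0,1] via a ternary expansion
   with a continuous inverse on the closure of the image.
   When F is empty one uses a singleton instead: an infinite minimal system has no periodic
   points, so invariant measures have no atoms. *)

definition cantor_code :: "(nat \<Rightarrow> bool) \<Rightarrow> real" where
  "cantor_code b = (\<Sum>i. (if b i then 2 else 0) / 3 ^ Suc i)"

lemma sums_two_div_three_power: "(\<lambda>j. 2 / 3 ^ Suc (j + m) :: real) sums (1 / 3 ^ m)"
proof -
  have "(\<lambda>j. (2 / 3 ^ Suc m) * (1 / 3 :: real) ^ j) sums ((2 / 3 ^ Suc m) * (1 / (1 - 1 / 3)))"
    by (intro sums_mult geometric_sums) simp
  then show ?thesis by (simp add: power_add power_divide field_simps)
qed

lemma summable_cantor_code: "summable (\<lambda>i. (if b i then 2 else 0) / 3 ^ Suc i :: real)"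
  by (rule summable_comparison_test[OF _ sums_summable[OF sums_two_div_three_power[of 0]]]) auto

lemma cantor_code_nonneg: "0 \<le> cantor_code b"
  unfolding cantor_code_def by (intro suminf_nonneg summable_cantor_code) auto

lemma cantor_code_le_1: "cantor_code b \<le> 1"
proof -
  have "cantor_code b \<le> (\<Sum>j. 2 / 3 ^ Suc (j + 0))"
    unfolding cantor_code_def
    by (intro suminf_le summable_cantor_code sums_summable[OF sums_two_div_three_power]) auto
  then show ?thesis using sums_unique[OF sums_two_div_three_power[of 0]] by simp
qed

lemma cantor_code_dist_ge:
  assumes agree: "\<And>j. j < i \<Longrightarrow> b j = b' j" and differ: "b i \<noteq> b' i"
  shows "1 / 3 ^ Suc i \<le> \<bar>cantor_code b - cantor_code b'\<bar>"
proof -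
  define D where "D j = (if b j then 2 else 0) / 3 ^ Suc j - (if b' j then 2 else 0) / (3::real) ^ Suc j"
    for j
  have "summable D" unfolding D_def by (intro summable_diff summable_cantor_code)
  have "cantor_code b - cantor_code b' = suminf D"
    unfolding cantor_code_def D_def by (rule suminf_diff[OF summable_cantor_code summable_cantor_code])
  also have "\<dots> = (\<Sum>j. D (j + Suc i)) + D i"
    using suminf_split_initial_segment[OF \<open>summable D\<close>, of "Suc i"] agree by (simp add: D_def)
  finally have split: "cantor_code b - cantor_code b' = (\<Sum>j. D (j + Suc i)) + D i" .
  have "norm (\<Sum>j. D (j + Suc i)) \<le> (\<Sum>j. 2 / 3 ^ Suc (j + Suc i))"
  proof (rule norm_suminf_le)
    show "norm (D (j + Suc i)) \<le> 2 / 3 ^ Suc (j + Suc i)" for j unfolding D_def by auto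
  qed (rule sums_summable[OF sums_two_div_three_power])
  also have "\<dots> = 1 / 3 ^ Suc i" by (rule sums_unique[OF sums_two_div_three_power, symmetric])
  finally have "\<bar>\<Sum>j. D (j + Suc i)\<bar> \<le> 1 / 3 ^ Suc i" by simp
  moreover have "\<bar>D i\<bar> = 2 / 3 ^ Suc i" using differ unfolding D_def by auto
  ultimately show ?thesis using split by linarith
qed

lemma cantor_code_close_imp_agree:
  assumes "\<bar>cantor_code b - cantor_code b'\<bar> < 1 / 3 ^ k" and "i < k"
  shows "b i = b' i"
proof (rule ccontr)
  assume "b i \<noteq> b' i"
  define i0 where "i0 = (LEAST j. b j \<noteq> b' j)"
  have "b i0 \<noteq> b' i0" unfolding i0_def by (rule LeastI) fact
  have "i0 \<le> i" unfolding i0_def by (rule Least_le) fact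
  have "1 / 3 ^ Suc i0 \<le> \<bar>cantor_code b - cantor_code b'\<bar>"
  proof (rule cantor_code_dist_ge)
    show "b j = b' j" if "j < i0" for j using not_less_Least[OF that[unfolded i0_def]] by simp
  qed fact
  moreover have "(1::real) / 3 ^ k \<le> 1 / 3 ^ Suc i0"
    using \<open>i0 \<le> i\<close> \<open>i < k\<close> by (intro divide_left_mono power_increasing) auto
  ultimately show False using assms(1) by linarith
qed

lemma compact_metric_finite_net:
  assumes "compact (UNIV :: 'a::metric_space set)" and "r > 0"
  shows "\<exists>c (N :: nat). (UNIV :: 'a set) \<subseteq> (\<Union>j<N. ball (c j) r)"
proof -
  have "(UNIV :: 'a set) \<subseteq> (\<Union>t. ball t r)"
  proof
    fix x show "x \<in> (\<Union>t. ball t r)" by (rule UN_I[of x]) (simp_all add: \<open>r > 0\<close>)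
  qed
  then obtain T where "finite T" "(UNIV :: 'a set) \<subseteq> (\<Union>t\<in>T. ball t r)"
    by (rule compactE_image[OF assms(1) open_ball])
  moreover obtain c and N :: nat where "T = c ` {..<N}"
    using finite_imp_nat_seg_image_inj_on[OF \<open>finite T\<close>] unfolding lessThan_def by blast
  ultimately show ?thesis by auto
qed

lemma compact_metric_separating_closed_sets:
  assumes "compact (UNIV :: 'a set)"
  obtains C :: "nat \<Rightarrow> 'a::metric_space set" where "\<And>i. closed (C i)"
    and "\<And>e. e > 0 \<Longrightarrow> \<exists>k. \<forall>x y. (\<forall>i<k. x \<in> C i \<longleftrightarrow> y \<in> C i) \<longrightarrow> dist x y < e"
proof -
  have "\<exists>c (N :: nat). (UNIV :: 'a set) \<subseteq> (\<Union>j<N. ball (c j) (1 / (real q + 1)))" for q :: nat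
    by (rule compact_metric_finite_net[OF assms]) simp
  then obtain c and N :: "nat \<Rightarrow> nat"
    where net: "\<And>q. (UNIV :: 'a set) \<subseteq> (\<Union>j<N q. ball (c q j) (1 / (real q + 1)))"
    by metis
  define C where "C i = (case prod_decode i of (q, j) \<Rightarrow> cball (c q j) (1 / (real q + 1)))" for i
  show thesis
  proof
    show "closed (C i)" for i unfolding C_def by (simp split: prod.split)
    fix e :: real assume "e > 0"
    then obtain q :: nat where "inverse (real (Suc q)) < e / 2" using reals_Archimedean[of "e / 2"] by auto
    then have q: "2 / (real q + 1) < e" by (simp add: field_simps)
    obtain k where k: "prod_encode ` ({q} \<times> {..<N q}) \<subseteq> {..<k}"
      using finite_nat_bounded[of "prod_encode ` ({q} \<times> {..<N q})"] by auto
    show "\<exists>k. \<forall>x y. (\<forall>i<k. x \<in> C i \<longleftrightarrow> y \<in> C i) \<longrightarrow> dist x y < e"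
    proof (intro exI allI impI)
      fix x y assume agree: "\<forall>i<k. x \<in> C i \<longleftrightarrow> y \<in> C i"
      obtain j where j: "j < N q" "x \<in> ball (c q j) (1 / (real q + 1))" using net[of q] by blast
      have "prod_encode (q, j) < k" using k j(1) by auto
      moreover have "C (prod_encode (q, j)) = cball (c q j) (1 / (real q + 1))" by (simp add: C_def)
      ultimately have "y \<in> cball (c q j) (1 / (real q + 1))" using agree j(2) by auto
      then have "dist x y < 2 / (real q + 1)"
        using j(2) dist_triangle[of x y "c q j"] by (simp add: dist_commute)
      then show "dist x y < e" using q by linarith
    qed
  qed
qed

definition uniformly_injective :: "('a::metric_space \<Rightarrow> 'b::metric_space) \<Rightarrow> bool" where
  "uniformly_injective \<psi> \<longleftrightarrow> (\<forall>e>0. \<exists>d>0. \<forall>x y. dist (\<psi> x) (\<psi> y) < d \<longrightarrow> dist x y < e)"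

lemma compact_metric_Borel_code:
  assumes "compact (UNIV :: 'a set)"
  obtains \<psi> :: "'a::metric_space \<Rightarrow> real"
  where "\<psi> \<in> borel_measurable borel" "\<And>x. \<psi> x \<in> {0..1}" "uniformly_injective \<psi>"
proof -
  obtain C :: "nat \<Rightarrow> 'a set" where C: "\<And>i. closed (C i)"
    "\<And>e. e > 0 \<Longrightarrow> \<exists>k. \<forall>x y. (\<forall>i<k. x \<in> C i \<longleftrightarrow> y \<in> C i) \<longrightarrow> dist x y < e"
    using compact_metric_separating_closed_sets[OF assms] by blast
  define \<psi> where "\<psi> x = cantor_code (\<lambda>i. x \<in> C i)" for x
  show thesis
  proof
    have "C i \<in> sets borel" for i using C(1) by auto
    then have "(\<lambda>x. (if x \<in> C i then 2 else 0) / 3 ^ Suc i :: real) \<in> borel_measurable borel" for i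
      by (intro borel_measurable_divide measurable_If_set) auto
    then show "\<psi> \<in> borel_measurable borel"
      unfolding \<psi>_def cantor_code_def by (rule borel_measurable_suminf)
    show "\<psi> x \<in> {0..1}" for x unfolding \<psi>_def using cantor_code_nonneg cantor_code_le_1 by simp
    show "uniformly_injective \<psi>" unfolding uniformly_injective_def
    proof (intro allI impI)
      fix e :: real assume "e > 0"
      then obtain k where k: "\<forall>x y. (\<forall>i<k. x \<in> C i \<longleftrightarrow> y \<in> C i) \<longrightarrow> dist x y < e"
        using C(2) by blast
      show "\<exists>d>0. \<forall>x y. dist (\<psi> x) (\<psi> y) < d \<longrightarrow> dist x y < e"
      proof (intro exI[of _ "1 / 3 ^ k"] conjI allI impI)
        fix x y assume "dist (\<psi> x) (\<psi> y) < 1 / 3 ^ k"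
        then have "\<forall>i<k. x \<in> C i \<longleftrightarrow> y \<in> C i"
          using cantor_code_close_imp_agree[of "\<lambda>i. x \<in> C i" "\<lambda>i. y \<in> C i" k]
          unfolding \<psi>_def dist_real_def by blast
        then show "dist x y < e" using k by blast
      qed simp
    qed
  qed
qed

definition preimage_limit :: "('a::metric_space \<Rightarrow> 'b::metric_space) \<Rightarrow> 'b \<Rightarrow> 'a \<Rightarrow> bool" where
  "preimage_limit \<psi> t x \<longleftrightarrow> (\<exists>s. (\<lambda>n. \<psi> (s n)) \<longlonglongrightarrow> t \<and> s \<longlonglongrightarrow> x)"

lemma preimage_limit_self: "preimage_limit \<psi> (\<psi> x) x"
  unfolding preimage_limit_def by (intro exI[of _ "\<lambda>_. x"]) simp

lemma preimage_limit_exists: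
  fixes \<psi> :: "'a::metric_space \<Rightarrow> 'b::metric_space"
  assumes "compact (UNIV :: 'a set)" and "t \<in> closure (range \<psi>)"
  shows "\<exists>x. preimage_limit \<psi> t x"
proof -
  obtain s0 where s0: "\<And>n. s0 n \<in> range \<psi>" "s0 \<longlonglongrightarrow> t"
    using assms(2) unfolding closure_sequential by blast
  define s where "s n = inv \<psi> (s0 n)" for n
  have \<psi>_s: "\<psi> (s n) = s0 n" for n unfolding s_def using s0(1) by (simp add: f_inv_into_f)
  obtain r x where "strict_mono r" "(s \<circ> r) \<longlonglongrightarrow> x"
    using compact_imp_seq_compact[OF assms(1)] by (rule seq_compactE) simp
  moreover have "(\<lambda>n. \<psi> ((s \<circ> r) n)) \<longlonglongrightarrow> t"
    using LIMSEQ_subseq_LIMSEQ[OF s0(2) \<open>strict_mono r\<close>] \<psi>_s by (simp add: comp_def)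
  ultimately show ?thesis unfolding preimage_limit_def by blast
qed

lemma preimage_limit_dist_le:
  assumes \<psi>: "\<forall>x y. dist (\<psi> x) (\<psi> y) < d \<longrightarrow> dist x y < e"
    and "preimage_limit \<psi> t x" "preimage_limit \<psi> t' x'" "dist t t' < d"
  shows "dist x x' \<le> e"
proof -
  obtain s where s: "(\<lambda>n. \<psi> (s n)) \<longlonglongrightarrow> t" "s \<longlonglongrightarrow> x"
    using assms(2) unfolding preimage_limit_def by blast
  obtain s' where s': "(\<lambda>n. \<psi> (s' n)) \<longlonglongrightarrow> t'" "s' \<longlonglongrightarrow> x'"
    using assms(3) unfolding preimage_limit_def by blast
  have "eventually (\<lambda>n. dist (\<psi> (s n)) (\<psi> (s' n)) < d) sequentially"
    using order_tendstoD(2)[OF tendsto_dist[OF s(1) s'(1)] \<open>dist t t' < d\<close>] .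
  then have "eventually (\<lambda>n. dist (s n) (s' n) \<le> e) sequentially"
    by eventually_elim (use \<psi> in \<open>auto intro: less_imp_le\<close>)
  with tendsto_dist[OF s(2) s'(2)] show ?thesis by (rule tendsto_upperbound) simp
qed

lemma preimage_limit_unique:
  assumes "uniformly_injective \<psi>" "preimage_limit \<psi> t x" "preimage_limit \<psi> t x'"
  shows "x = x'"
proof -
  have le: "dist x x' \<le> e" if "e > 0" for e
  proof -
    obtain d where "d > 0" and d: "\<forall>x y. dist (\<psi> x) (\<psi> y) < d \<longrightarrow> dist x y < e"
      using assms(1) \<open>e > 0\<close> unfolding uniformly_injective_def by blast
    then show ?thesis by (intro preimage_limit_dist_le[OF d assms(2,3)]) simp
  qed
  have "dist x x' \<le> 0" by (rule field_le_epsilon) (simp add: le)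
  then show ?thesis by simp
qed

lemma uniformly_injective_continuous_left_inverse:
  fixes \<psi> :: "'a::metric_space \<Rightarrow> 'b::metric_space"
  assumes cpt: "compact (UNIV :: 'a set)" and inj: "uniformly_injective \<psi>"
  obtains \<pi> where "continuous_on (closure (range \<psi>)) \<pi>" "\<And>x. \<pi> (\<psi> x) = x"
proof -
  define \<pi> where "\<pi> t = (SOME x. preimage_limit \<psi> t x)" for t
  have \<pi>: "preimage_limit \<psi> t (\<pi> t)" if "t \<in> closure (range \<psi>)" for t
    unfolding \<pi>_def using preimage_limit_exists[OF cpt that] by (rule someI_ex)
  show thesis
  proof
    show "\<pi> (\<psi> x) = x" for x
      using \<pi>[of "\<psi> x"] preimage_limit_unique[OF inj _ preimage_limit_self]
      by (meson closure_subset rangeI subsetD)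
    have "uniformly_continuous_on (closure (range \<psi>)) \<pi>"
      unfolding uniformly_continuous_on_def
    proof (intro allI impI)
      fix e :: real assume "e > 0"
      then obtain d where "d > 0" and d: "\<forall>x y. dist (\<psi> x) (\<psi> y) < d \<longrightarrow> dist x y < e / 2"
        using inj unfolding uniformly_injective_def by (meson half_gt_zero)
      have "dist (\<pi> t') (\<pi> t) < e"
        if "t \<in> closure (range \<psi>)" "t' \<in> closure (range \<psi>)" "dist t' t < d" for t t'
        using preimage_limit_dist_le[OF d \<pi>[OF that(2)] \<pi>[OF that(1)] that(3)] \<open>e > 0\<close> by simp
      with \<open>d > 0\<close> show "\<exists>d>0. \<forall>t\<in>closure (range \<psi>). \<forall>t'\<in>closure (range \<psi>).
          dist t' t < d \<longrightarrow> dist (\<pi> t') (\<pi> t) < e" by blast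
    qed
    then show "continuous_on (closure (range \<psi>)) \<pi>" by (rule uniformly_continuous_imp_continuous)
  qed
qed

definition infdist_cutoff :: "'a::metric_space set \<Rightarrow> nat \<Rightarrow> 'a \<Rightarrow> real" where
  "infdist_cutoff C k x = max 0 (min 1 (2 - (real k + 1) * infdist x C))"

lemma continuous_on_infdist_cutoff: "continuous_on UNIV (infdist_cutoff C k)"
  unfolding infdist_cutoff_def[abs_def]
  by (intro continuous_intros continuous_on_infdist continuous_on_id)

lemma infdist_cutoff_bounds: "0 \<le> infdist_cutoff C k x" "infdist_cutoff C k x \<le> 1"
  unfolding infdist_cutoff_def by auto

lemma norm_infdist_cutoff_le_1: "norm (infdist_cutoff C k x) \<le> 1"
  unfolding infdist_cutoff_def by auto

lemma bounded_range_infdist_cutoff: "bounded (range (infdist_cutoff C k))"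
  unfolding bounded_iff using norm_infdist_cutoff_le_1 by blast

lemma infdist_cutoff_eq_1: "infdist x C < 1 / (real k + 1) \<Longrightarrow> infdist_cutoff C k x = 1"
  unfolding infdist_cutoff_def by (simp add: field_simps)

lemma tendsto_infdist_cutoff:
  assumes "closed C" "C \<noteq> {}"
  shows "(\<lambda>k. infdist_cutoff C k x) \<longlonglongrightarrow> indicator C x"
proof (cases "x \<in> C")
  case True
  then show ?thesis by (simp add: infdist_cutoff_def)
next
  case False
  then have "infdist x C > 0"
    using assms in_closed_iff_infdist_zero infdist_nonneg by (metis less_eq_real_def)
  obtain K :: nat where K: "2 / infdist x C < real K" using reals_Archimedean2 by blast
  have "eventually (\<lambda>k. infdist_cutoff C k x = 0) sequentially"
  proof (rule eventually_sequentiallyI[of K])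
    fix k assume "K \<le> k"
    with K have "2 / infdist x C < real k + 1" by linarith
    with \<open>infdist x C > 0\<close> have "2 < (real k + 1) * infdist x C" by (simp add: field_simps)
    then show "infdist_cutoff C k x = 0" unfolding infdist_cutoff_def by simp
  qed
  then show ?thesis using False by (simp add: tendsto_eventually)
qed

lemma tendsto_integral_infdist_cutoff:
  assumes "finite_measure L" "sets L = sets borel" "closed C" "C \<noteq> {}"
  shows "(\<lambda>k. \<integral>x. infdist_cutoff C k x \<partial>L) \<longlonglongrightarrow> measure L C"
proof -
  interpret finite_measure L by fact
  have "C \<in> sets L" using assms by simp
  have "(\<lambda>k. \<integral>x. infdist_cutoff C k x \<partial>L) \<longlonglongrightarrow> (\<integral>x. indicator C x \<partial>L)"
  proof (rule integral_dominated_convergence[where w="\<lambda>_. 1"])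
    show "infdist_cutoff C k \<in> borel_measurable L" for k
      using borel_measurable_continuous_onI[OF continuous_on_infdist_cutoff]
      by (simp add: measurable_cong_sets[OF assms(2) refl])
    show "AE x in L. norm (infdist_cutoff C k x) \<le> 1" for k
      by (intro AE_I2) (rule norm_infdist_cutoff_le_1)
    show "AE x in L. (\<lambda>k. infdist_cutoff C k x) \<longlonglongrightarrow> indicator C x"
      using tendsto_infdist_cutoff[OF assms(3,4)] by simp
  qed (use \<open>C \<in> sets L\<close> in auto)
  then show ?thesis using \<open>C \<in> sets L\<close> by simp
qed

lemma finite_measure_eqI_continuous:
  fixes M N :: "'a::metric_space measure"
  assumes "finite_measure M" "finite_measure N" "sets M = sets borel" "sets N = sets borel"
    and integral_eq: "\<And>f::'a \<Rightarrow> real. continuous_on UNIV f \<Longrightarrow> bounded (range f) \<Longrightarrow>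
      (\<integral>x. f x \<partial>M) = (\<integral>x. f x \<partial>N)"
  shows "M = N"
proof -
  have closed_eq: "emeasure M C = emeasure N C" if "closed C" for C
  proof (cases "C = {}")
    case False
    have "(\<lambda>k. \<integral>x. infdist_cutoff C k x \<partial>N) \<longlonglongrightarrow> measure M C"
      using tendsto_integral_infdist_cutoff[OF assms(1,3) that False]
        integral_eq[OF continuous_on_infdist_cutoff bounded_range_infdist_cutoff] by simp
    then have "measure M C = measure N C"
      using tendsto_integral_infdist_cutoff[OF assms(2,4) that False] by (rule LIMSEQ_unique)
    then show ?thesis using assms(1,2) by (simp add: finite_measure.emeasure_eq_measure)
  qed simp
  have "sets (borel :: 'a measure) = sigma_sets UNIV (Collect closed)"
    by (subst borel_eq_closed) (simp add: sets_measure_of)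
  then show ?thesis
  proof (intro measure_eqI_generator_eq[where E="Collect closed" and \<Omega>=UNIV and A="\<lambda>_. UNIV"])
    show "Int_stable (Collect closed :: 'a set set)" by (auto simp: Int_stable_def)
  qed (use closed_eq assms(1-4) in \<open>auto simp: finite_measure.emeasure_finite\<close>)
qed

definition converges_weakly :: "(nat \<Rightarrow> 'a::metric_space measure) \<Rightarrow> 'a measure \<Rightarrow> bool" where
  "converges_weakly \<mu> \<nu> \<longleftrightarrow> (\<forall>f::'a \<Rightarrow> real. continuous_on UNIV f \<longrightarrow> bounded (range f) \<longrightarrow>
     (\<lambda>n. \<integral>x. f x \<partial>\<mu> n) \<longlonglongrightarrow> (\<integral>x. f x \<partial>\<nu>))"

lemma converges_weaklyD:
  fixes f :: "'a::metric_space \<Rightarrow> real"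
  shows "converges_weakly \<mu> \<nu> \<Longrightarrow> continuous_on UNIV f \<Longrightarrow> bounded (range f) \<Longrightarrow>
    (\<lambda>n. \<integral>x. f x \<partial>\<mu> n) \<longlonglongrightarrow> (\<integral>x. f x \<partial>\<nu>)"
  unfolding converges_weakly_def by blast

lemma tight_distr_unit_interval:
  assumes "\<And>n. prob_space (\<mu> n)" "\<And>n. \<psi> \<in> borel_measurable (\<mu> n)" "\<And>x. \<psi> x \<in> {0..1::real}"
  shows "tight (\<lambda>n. distr (\<mu> n) borel \<psi>)"
  unfolding tight_def
proof (intro conjI allI impI)
  show "real_distribution (distr (\<mu> n) borel \<psi>)" for n
    using prob_space.prob_space_distr[OF assms(1,2)]
    by (simp add: real_distribution_def real_distribution_axioms_def)
  fix \<epsilon> :: real assume "\<epsilon> > 0"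
  have "measure (distr (\<mu> n) borel \<psi>) {-1<..2} = 1" for n
  proof -
    interpret prob_space "\<mu> n" by (rule assms(1))
    have "-1 < \<psi> x \<and> \<psi> x \<le> 2" for x using assms(3)[of x] by simp
    then have "\<psi> -` {-1<..2} \<inter> space (\<mu> n) = space (\<mu> n)" by auto
    then show ?thesis using measure_distr[OF assms(2)] prob_space by simp
  qed
  with \<open>\<epsilon> > 0\<close> show "\<exists>a b. a < b \<and> (\<forall>n. 1 - \<epsilon> < measure (distr (\<mu> n) borel \<psi>) {a<..b})"
    by (intro exI[of _ "-1"] exI[of _ 2]) auto
qed

lemma weak_conv_concentrated_on_closed:
  assumes \<nu>: "\<And>n. real_distribution (\<nu> n)" and M: "real_distribution M" and conv: "weak_conv_m \<nu> M"
    and K: "closed K" "K \<noteq> {}" and concentrated: "\<And>n. AE t in \<nu> n. t \<in> K"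
  shows "AE t in M. t \<in> K"
proof -
  interpret M: real_distribution M by fact
  have "(\<integral>t. infdist_cutoff K k t \<partial>M) = 1" for k
  proof -
    have "isCont (infdist_cutoff K k) t" for t
      using continuous_on_infdist_cutoff[of K k] by (simp add: continuous_on_eq_continuous_at)
    then have "(\<lambda>n. \<integral>t. infdist_cutoff K k t \<partial>\<nu> n) \<longlonglongrightarrow> (\<integral>t. infdist_cutoff K k t \<partial>M)"
      using norm_infdist_cutoff_le_1
      by (rule weak_conv_imp_integral_bdd_continuous_conv[OF \<nu> M conv, where f="infdist_cutoff K k" and B=1])
    moreover have "(\<integral>t. infdist_cutoff K k t \<partial>\<nu> n) = 1" for n
    proof -
      interpret real_distribution "\<nu> n" by (rule \<nu>)
      have "(\<integral>t. infdist_cutoff K k t \<partial>\<nu> n) = (\<integral>t. 1 \<partial>\<nu> n)"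
      proof (rule integral_cong_AE)
        show "AE t in \<nu> n. infdist_cutoff K k t = 1"
          using concentrated[of n] by eventually_elim (simp add: infdist_cutoff_def)
      qed (use borel_measurable_continuous_onI[OF continuous_on_infdist_cutoff] in
          \<open>simp_all add: measurable_cong_sets[OF events_eq_borel refl]\<close>)
      then show ?thesis using prob_space by simp
    qed
    ultimately show ?thesis by (simp add: LIMSEQ_const_iff)
  qed
  then have "measure M K = 1"
    using tendsto_integral_infdist_cutoff[OF M.finite_measure_axioms M.events_eq_borel K]
    by (simp add: LIMSEQ_const_iff)
  then show ?thesis by (rule M.AE_prob_1)
qed

lemma bounded_continuous_extension_from_closed:
  fixes g :: "real \<Rightarrow> real"
  assumes "continuous_on K g" "closed K" "bounded (g ` K)"
  obtains G where "continuous_on UNIV G" "bounded (range G)" "\<And>t. t \<in> K \<Longrightarrow> G t = g t"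
proof -
  obtain B where "B > 0" and B: "\<And>t. t \<in> K \<Longrightarrow> norm (g t) \<le> B"
    using assms(3) by (auto simp: bounded_pos)
  have "closedin (top_of_set UNIV) K" using assms(2) by simp
  then obtain G where "continuous_on UNIV G" "\<And>t. t \<in> K \<Longrightarrow> G t = g t"
    and G_B: "\<And>t. t \<in> UNIV \<Longrightarrow> norm (G t) \<le> B"
    by (rule Tietze[OF assms(1) _ less_imp_le[OF \<open>B > 0\<close>] B]) auto
  moreover have "bounded (range G)" unfolding bounded_iff using G_B by blast
  ultimately show thesis using that by blast
qed

lemma weak_conv_code_imp_converges_weakly:
  fixes \<mu> :: "nat \<Rightarrow> 'a::metric_space measure" and \<psi> :: "'a \<Rightarrow> real"
  assumes \<psi>_meas: "\<And>n. \<psi> \<in> borel_measurable (\<mu> n)" and \<psi>_K: "\<And>x. \<psi> x \<in> K" and K: "closed K"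
    and \<pi>_cont: "continuous_on K \<pi>" and \<pi>_\<psi>: "\<And>x. \<pi> (\<psi> x) = x"
    and codes: "\<And>n. real_distribution (distr (\<mu> n) borel \<psi>)" and M: "real_distribution M"
    and conv: "weak_conv_m (\<lambda>n. distr (\<mu> n) borel \<psi>) M" and M_K: "AE t in M. t \<in> K"
  obtains \<mu>' where "sets \<mu>' = sets borel" "prob_space \<mu>'" "converges_weakly \<mu> \<mu>'"
proof -
  interpret M: real_distribution M by (rule M)
  define \<pi>' where "\<pi>' t = (if t \<in> K then \<pi> t else undefined)" for t
  have \<pi>'_meas: "\<pi>' \<in> borel_measurable M"
    unfolding \<pi>'_def measurable_cong_sets[OF M.events_eq_borel refl]
    using \<pi>_cont K by (intro borel_measurable_continuous_on_if) simp_all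
  show thesis
  proof
    show "sets (distr M borel \<pi>') = sets borel" by simp
    show "prob_space (distr M borel \<pi>')" by (rule M.prob_space_distr[OF \<pi>'_meas])
    show "converges_weakly \<mu> (distr M borel \<pi>')"
      unfolding converges_weakly_def
    proof (intro allI impI)
      fix f :: "'a \<Rightarrow> real" assume f: "continuous_on UNIV f" "bounded (range f)"
      have "continuous_on K (f \<circ> \<pi>)"
        using continuous_on_compose[OF \<pi>_cont continuous_on_subset[OF f(1)]] by simp
      moreover have "bounded ((f \<circ> \<pi>) ` K)" using f(2) by (rule bounded_subset) auto
      ultimately obtain G where G: "continuous_on UNIV G" "bounded (range G)"
        and G_K: "\<And>t. t \<in> K \<Longrightarrow> G t = (f \<circ> \<pi>) t"
        by (rule bounded_continuous_extension_from_closed[OF _ K]) auto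
      obtain B where "\<And>t. norm (G t) \<le> B" using G(2) unfolding bounded_iff by blast
      moreover have "isCont G t" for t using G(1) by (simp add: continuous_on_eq_continuous_at)
      ultimately have "(\<lambda>n. \<integral>t. G t \<partial>distr (\<mu> n) borel \<psi>) \<longlonglongrightarrow> (\<integral>t. G t \<partial>M)"
        by (intro weak_conv_imp_integral_bdd_continuous_conv[OF codes M conv, where f=G and B=B])
      moreover have "(\<integral>t. G t \<partial>distr (\<mu> n) borel \<psi>) = (\<integral>x. f x \<partial>\<mu> n)" for n
        using integral_distr[OF \<psi>_meas borel_measurable_continuous_onI[OF G(1)]]
        by (simp add: G_K \<psi>_K \<pi>_\<psi>)
      moreover have "(\<integral>t. G t \<partial>M) = (\<integral>x. f x \<partial>distr M borel \<pi>')"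
      proof -
        have "(\<integral>t. G t \<partial>M) = (\<integral>t. f (\<pi>' t) \<partial>M)"
        proof (rule integral_cong_AE)
          show "G \<in> borel_measurable M"
            using borel_measurable_continuous_onI[OF G(1)]
            by (simp add: measurable_cong_sets[OF M.events_eq_borel refl])
          show "(\<lambda>t. f (\<pi>' t)) \<in> borel_measurable M"
            by (rule measurable_compose[OF \<pi>'_meas borel_measurable_continuous_onI[OF f(1)]])
          show "AE t in M. G t = f (\<pi>' t)"
            using M_K by eventually_elim (simp add: G_K \<pi>'_def)
        qed
        also have "\<dots> = (\<integral>x. f x \<partial>distr M borel \<pi>')"
          by (rule integral_distr[symmetric, OF \<pi>'_meas borel_measurable_continuous_onI[OF f(1)]])
        finally show ?thesis .
      qed
      ultimately show "(\<lambda>n. \<integral>x. f x \<partial>\<mu> n) \<longlonglongrightarrow> (\<integral>x. f x \<partial>distr M borel \<pi>')" by simp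
    qed
  qed
qed

lemma compact_metric_weakly_convergent_subsequence:
  fixes \<mu> :: "nat \<Rightarrow> 'a::metric_space measure"
  assumes cpt: "compact (UNIV :: 'a set)"
    and sets_\<mu>: "\<And>n. sets (\<mu> n) = sets borel" and prob_\<mu>: "\<And>n. prob_space (\<mu> n)"
  obtains r \<mu>' where "strict_mono r" "sets \<mu>' = sets borel" "prob_space \<mu>'"
    "converges_weakly (\<mu> \<circ> r) \<mu>'"
proof -
  obtain \<psi> :: "'a \<Rightarrow> real" where \<psi>_meas: "\<psi> \<in> borel_measurable borel"
    and \<psi>_01: "\<And>x. \<psi> x \<in> {0..1}" and \<psi>_inj: "uniformly_injective \<psi>"
    using compact_metric_Borel_code[OF cpt] by blast
  obtain \<pi> where \<pi>_cont: "continuous_on (closure (range \<psi>)) \<pi>" and \<pi>_\<psi>: "\<And>x. \<pi> (\<psi> x) = x"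
    using uniformly_injective_continuous_left_inverse[OF cpt \<psi>_inj] by blast
  define K where "K = closure (range \<psi>)"
  have K: "closed K" "K \<noteq> {}" and \<psi>_K: "\<And>x. \<psi> x \<in> K"
    unfolding K_def by (auto intro: closure_subset[THEN subsetD])
  have \<psi>_meas_\<mu>: "\<psi> \<in> borel_measurable (\<mu> n)" for n
    using \<psi>_meas by (simp add: measurable_cong_sets[OF sets_\<mu> refl])
  define \<nu> where "\<nu> n = distr (\<mu> n) borel \<psi>" for n
  have tight: "tight \<nu>"
    unfolding \<nu>_def by (rule tight_distr_unit_interval[OF prob_\<mu> \<psi>_meas_\<mu> \<psi>_01])
  then obtain r M where r: "strict_mono r" and M: "real_distribution M"
    and conv: "weak_conv_m (\<nu> \<circ> r) M"
    using tight_imp_convergent_subsubsequence[OF tight strict_mono_id] by auto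
  have \<nu>_real: "real_distribution ((\<nu> \<circ> r) n)" for n using tight unfolding tight_def by simp
  have M_K: "AE t in M. t \<in> K"
  proof (rule weak_conv_concentrated_on_closed[OF \<nu>_real M conv K])
    show "AE t in (\<nu> \<circ> r) n. t \<in> K" for n
      unfolding \<nu>_def comp_def by (subst AE_distr_iff[OF \<psi>_meas_\<mu>]) (use \<psi>_K K(1) in auto)
  qed
  have \<psi>_meas_\<mu>r: "\<psi> \<in> borel_measurable ((\<mu> \<circ> r) n)" for n by (simp add: \<psi>_meas_\<mu>)
  have codes: "real_distribution (distr ((\<mu> \<circ> r) n) borel \<psi>)" for n
    using \<nu>_real by (simp add: \<nu>_def)
  have conv': "weak_conv_m (\<lambda>n. distr ((\<mu> \<circ> r) n) borel \<psi>) M"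
    using conv by (simp add: \<nu>_def comp_def)
  obtain \<mu>' where "sets \<mu>' = sets borel" "prob_space \<mu>'" "converges_weakly (\<mu> \<circ> r) \<mu>'"
    by (rule weak_conv_code_imp_converges_weakly[OF \<psi>_meas_\<mu>r \<psi>_K K(1) \<pi>_cont[folded K_def] \<pi>_\<psi>
        codes M conv' M_K])
  with r show thesis by (rule that)
qed

lemma invariant_measuresD:
  assumes "\<mu> \<in> invariant_measures h"
  shows "sets \<mu> = sets borel" "prob_space \<mu>"
    "\<And>B. B \<in> sets borel \<Longrightarrow> emeasure \<mu> (h -` B) = emeasure \<mu> B"
  using assms unfolding invariant_measures_def by auto

lemma invariant_measures_iff_distr:
  assumes h: "h \<in> borel_measurable borel"
  shows "\<mu> \<in> invariant_measures h \<longleftrightarrow> sets \<mu> = sets borel \<and> prob_space \<mu> \<and> distr \<mu> borel h = \<mu>"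
proof -
  have "emeasure (distr \<mu> borel h) B = emeasure \<mu> (h -` B)"
    if "sets \<mu> = sets borel" "B \<in> sets borel" for B
    using emeasure_distr[of h \<mu> borel B] h that sets_eq_imp_space_eq[OF that(1)]
    by (simp add: measurable_cong_sets[OF that(1) refl])
  then show ?thesis
    unfolding invariant_measures_def by (auto intro!: measure_eqI)
qed

lemma converges_weakly_invariant:
  fixes h :: "'a::metric_space \<Rightarrow> 'a"
  assumes h: "continuous_on UNIV h" and \<mu>: "\<And>n. \<mu> n \<in> invariant_measures h"
    and \<nu>: "sets \<nu> = sets borel" "prob_space \<nu>" and conv: "converges_weakly \<mu> \<nu>"
  shows "\<nu> \<in> invariant_measures h"
proof -
  have h_meas: "h \<in> borel_measurable borel" by (rule borel_measurable_continuous_onI[OF h])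
  interpret \<nu>: prob_space \<nu> by fact
  have h_meas_\<nu>: "h \<in> borel_measurable \<nu>"
    using h_meas by (simp add: measurable_cong_sets[OF \<nu>(1) refl])
  have "distr \<nu> borel h = \<nu>"
  proof (rule finite_measure_eqI_continuous)
    show "finite_measure (distr \<nu> borel h)"
      by (rule prob_space.finite_measure[OF \<nu>.prob_space_distr[OF h_meas_\<nu>]])
    fix f :: "'a \<Rightarrow> real" assume f: "continuous_on UNIV f" "bounded (range f)"
    have f_meas: "f \<in> borel_measurable borel" by (rule borel_measurable_continuous_onI[OF f(1)])
    have "continuous_on UNIV (\<lambda>x. f (h x))"
      using continuous_on_compose[OF h continuous_on_subset[OF f(1)]] by (simp add: comp_def)
    moreover have "bounded (range (\<lambda>x. f (h x)))" using f(2) by (rule bounded_subset) auto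
    ultimately have "(\<lambda>n. \<integral>x. f (h x) \<partial>\<mu> n) \<longlonglongrightarrow> (\<integral>x. f (h x) \<partial>\<nu>)"
      by (rule converges_weaklyD[OF conv])
    moreover have "(\<integral>x. f (h x) \<partial>\<mu> n) = (\<integral>x. f x \<partial>\<mu> n)" for n
    proof -
      have "h \<in> borel_measurable (\<mu> n)"
        using h_meas by (simp add: measurable_cong_sets[OF invariant_measuresD(1)[OF \<mu>] refl])
      then have "(\<integral>x. f (h x) \<partial>\<mu> n) = (\<integral>x. f x \<partial>distr (\<mu> n) borel h)"
        by (rule integral_distr[symmetric, OF _ f_meas])
      then show ?thesis using \<mu>[of n] invariant_measures_iff_distr[OF h_meas] by simp
    qed
    ultimately have "(\<lambda>n. \<integral>x. f x \<partial>\<mu> n) \<longlonglongrightarrow> (\<integral>x. f (h x) \<partial>\<nu>)" by simp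
    from LIMSEQ_unique[OF this converges_weaklyD[OF conv f]]
    have "(\<integral>x. f (h x) \<partial>\<nu>) = (\<integral>x. f x \<partial>\<nu>)" .
    then show "(\<integral>x. f x \<partial>distr \<nu> borel h) = (\<integral>x. f x \<partial>\<nu>)"
      using integral_distr[OF h_meas_\<nu> f_meas] by simp
  qed (use \<nu> \<nu>.finite_measure_axioms in simp_all)
  then show ?thesis using invariant_measures_iff_distr[OF h_meas] \<nu> by simp
qed

lemma converges_weakly_closed_ge:
  fixes F :: "'a::metric_space set"
  assumes conv: "converges_weakly \<mu> \<nu>" and \<nu>: "finite_measure \<nu>" "sets \<nu> = sets borel"
    and \<mu>: "\<And>n. prob_space (\<mu> n)" "\<And>n. sets (\<mu> n) = sets borel"
    and F: "closed F" "F \<noteq> {}" and \<delta>: "\<delta> \<longlonglongrightarrow> 0"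
    and ge: "\<And>n. c \<le> measure (\<mu> n) {x. infdist x F < \<delta> n}"
  shows "c \<le> measure \<nu> F"
proof -
  have "c \<le> (\<integral>x. infdist_cutoff F k x \<partial>\<nu>)" for k
  proof (rule tendsto_lowerbound)
    show "(\<lambda>n. \<integral>x. infdist_cutoff F k x \<partial>\<mu> n) \<longlonglongrightarrow> (\<integral>x. infdist_cutoff F k x \<partial>\<nu>)"
      by (rule converges_weaklyD[OF conv continuous_on_infdist_cutoff bounded_range_infdist_cutoff])
    have "eventually (\<lambda>n. \<delta> n < 1 / (real k + 1)) sequentially"
      by (rule order_tendstoD(2)[OF \<delta>]) simp
    then show "eventually (\<lambda>n. c \<le> (\<integral>x. infdist_cutoff F k x \<partial>\<mu> n)) sequentially"
    proof eventually_elim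
      case (elim n)
      interpret prob_space "\<mu> n" by (rule \<mu>(1))
      define U where "U = {x. infdist x F < \<delta> n}"
      have "open U" unfolding U_def
        by (rule open_Collect_less) (auto intro!: continuous_intros continuous_on_infdist)
      then have U_sets: "U \<in> sets (\<mu> n)" using \<mu>(2) by simp
      have "indicator U x \<le> infdist_cutoff F k x" for x
        using elim by (cases "x \<in> U") (simp_all add: U_def infdist_cutoff_eq_1 infdist_cutoff_bounds)
      moreover have "integrable (\<mu> n) (infdist_cutoff F k)"
      proof (rule integrable_const_bound[where B=1])
        show "AE x in \<mu> n. norm (infdist_cutoff F k x) \<le> 1"
          by (intro AE_I2 norm_infdist_cutoff_le_1)
        show "infdist_cutoff F k \<in> borel_measurable (\<mu> n)"
          using borel_measurable_continuous_onI[OF continuous_on_infdist_cutoff]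
          by (simp add: measurable_cong_sets[OF \<mu>(2) refl])
      qed
      ultimately have "(\<integral>x. indicator U x \<partial>\<mu> n) \<le> (\<integral>x. infdist_cutoff F k x \<partial>\<mu> n)"
        using U_sets by (intro integral_mono)
          (auto intro!: integrable_real_indicator simp: less_top[symmetric] emeasure_finite)
      then show "c \<le> (\<integral>x. infdist_cutoff F k x \<partial>\<mu> n)" using ge[of n] U_sets by (simp add: U_def)
    qed
  qed simp
  then show ?thesis
    by (intro tendsto_lowerbound[OF tendsto_integral_infdist_cutoff[OF \<nu> F]]) simp_all
qed

lemma closed_universally_null_small_nbhd:
  fixes h :: "'a::metric_space \<Rightarrow> 'a"
  assumes cpt: "compact (UNIV :: 'a set)" and h: "continuous_on UNIV h"
    and "\<epsilon> > 0" and F: "closed F" "F \<noteq> {}" and null: "universally_null h F"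
  shows "\<exists>E. open E \<and> F \<subseteq> E \<and> (\<forall>\<mu>\<in>invariant_measures h. emeasure \<mu> E < ennreal \<epsilon>)"
proof (rule ccontr)
  assume no_small_nbhd: "\<not> ?thesis"
  define U where "U n = {x. infdist x F < inverse (real (Suc n))}" for n
  have large_exists: "\<exists>\<mu>. \<mu> \<in> invariant_measures h \<and> ennreal \<epsilon> \<le> emeasure \<mu> (U n)" for n
  proof -
    have "open (U n)" unfolding U_def
      by (rule open_Collect_less) (auto intro!: continuous_intros continuous_on_infdist)
    moreover have "F \<subseteq> U n" unfolding U_def by auto
    ultimately have "\<not> (\<forall>\<mu>\<in>invariant_measures h. emeasure \<mu> (U n) < ennreal \<epsilon>)"
      using no_small_nbhd by blast
    then show ?thesis by (auto simp: not_less)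
  qed
  from choice[OF allI[OF large_exists]]
  obtain \<mu> where "\<forall>n. \<mu> n \<in> invariant_measures h \<and> ennreal \<epsilon> \<le> emeasure (\<mu> n) (U n)" ..
  then have \<mu>: "\<And>n. \<mu> n \<in> invariant_measures h" and large: "\<And>n. ennreal \<epsilon> \<le> emeasure (\<mu> n) (U n)"
    by auto
  note \<mu>D = invariant_measuresD[OF \<mu>]
  obtain r \<nu> where r: "strict_mono r" and \<nu>: "sets \<nu> = sets borel" "prob_space \<nu>"
    and conv: "converges_weakly (\<mu> \<circ> r) \<nu>"
    by (rule compact_metric_weakly_convergent_subsequence[OF cpt \<mu>D(1,2)])
  have "\<nu> \<in> invariant_measures h"
    by (rule converges_weakly_invariant[OF h _ \<nu> conv]) (simp add: \<mu>)
  then have "measure \<nu> F = 0" using null unfolding universally_null_def measure_def by simp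
  moreover have "\<epsilon> \<le> measure \<nu> F"
  proof (rule converges_weakly_closed_ge[OF conv prob_space.finite_measure[OF \<nu>(2)] \<nu>(1) _ _ F])
    show "(\<lambda>n. inverse (real (Suc (r n)))) \<longlonglongrightarrow> 0"
      using LIMSEQ_subseq_LIMSEQ[OF LIMSEQ_inverse_real_of_nat r] by (simp add: comp_def)
    show "\<epsilon> \<le> measure ((\<mu> \<circ> r) n) {x. infdist x F < inverse (real (Suc (r n)))}" for n
      using large[of "r n"] \<open>\<epsilon> > 0\<close> finite_measure.emeasure_eq_measure[OF prob_space.finite_measure[OF \<mu>D(2)]]
      by (simp add: U_def)
  qed (simp_all add: \<mu>D(1,2))
  ultimately show False using \<open>\<epsilon> > 0\<close> by linarith
qed

lemma image_periodic_orbit: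
  assumes periodic: "(h ^^ q) y = y" and "q > 0"
  shows "h ` (\<lambda>k. (h ^^ k) y) ` {..<q} = (\<lambda>k. (h ^^ k) y) ` {..<q}"
proof
  show "h ` (\<lambda>k. (h ^^ k) y) ` {..<q} \<subseteq> (\<lambda>k. (h ^^ k) y) ` {..<q}"
  proof (clarsimp)
    fix k assume "k < q"
    show "h ((h ^^ k) y) \<in> (\<lambda>k. (h ^^ k) y) ` {..<q}"
    proof (cases "Suc k = q")
      case True
      then have "h ((h ^^ k) y) = (h ^^ 0) y" using periodic by auto
      then show ?thesis using \<open>q > 0\<close> by blast
    next
      case False
      then show ?thesis using \<open>k < q\<close> by (intro image_eqI[of _ _ "Suc k"]) auto
    qed
  qed
  show "(\<lambda>k. (h ^^ k) y) ` {..<q} \<subseteq> h ` (\<lambda>k. (h ^^ k) y) ` {..<q}"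
  proof (clarsimp)
    fix k assume "k < q"
    show "(h ^^ k) y \<in> h ` (\<lambda>k. (h ^^ k) y) ` {..<q}"
    proof (cases k)
      case 0
      have "(h ^^ k) y = h ((h ^^ (q - 1)) y)"
        using periodic \<open>q > 0\<close> 0 by (metis Suc_pred' comp_apply funpow.simps funpow_0)
      then show ?thesis using \<open>q > 0\<close> by auto
    next
      case (Suc m)
      then show ?thesis using \<open>k < q\<close> by auto
    qed
  qed
qed

lemma minimal_map_no_periodic_points:
  fixes h :: "'a::t1_space \<Rightarrow> 'a"
  assumes "infinite (UNIV :: 'a set)" "minimal_map h" "q > 0"
  shows "(h ^^ q) y \<noteq> y"
proof
  assume "(h ^^ q) y = y"
  define Orb where "Orb = (\<lambda>k. (h ^^ k) y) ` {..<q}"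
  have "h ` Orb = Orb" unfolding Orb_def by (rule image_periodic_orbit) fact+
  moreover have "closed Orb" unfolding Orb_def by (intro finite_imp_closed) simp
  ultimately have "Orb = {} \<or> Orb = UNIV" using assms(2) unfolding minimal_map_def by blast
  moreover have "y \<in> Orb" unfolding Orb_def using \<open>q > 0\<close> by force
  moreover have "finite Orb" unfolding Orb_def by simp
  ultimately show False using assms(1) by auto
qed

lemma minimal_map_inj_orbit:
  fixes h :: "'a::t1_space \<Rightarrow> 'a"
  assumes "infinite (UNIV :: 'a set)" "minimal_map h"
  shows "inj (\<lambda>k. (h ^^ k) x)"
proof -
  have distinct: "(h ^^ i) x \<noteq> (h ^^ j) x" if "i < j" for i j
  proof
    assume eq: "(h ^^ i) x = (h ^^ j) x"
    have "(h ^^ (j - i)) ((h ^^ i) x) = (h ^^ (j - i + i)) x" by (simp add: funpow_add)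
    also have "\<dots> = (h ^^ i) x" using that eq by simp
    finally show False using minimal_map_no_periodic_points[OF assms, of "j - i"] that by simp
  qed
  show ?thesis
  proof (rule injI)
    fix i j assume "(h ^^ i) x = (h ^^ j) x"
    then show "i = j" using distinct[of i j] distinct[of j i] by (cases i j rule: linorder_cases) auto
  qed
qed

lemma universally_null_singleton:
  fixes h :: "'a::metric_space \<Rightarrow> 'a"
  assumes "infinite (UNIV :: 'a set)" "inj h" "minimal_map h"
  shows "universally_null h {x}"
  unfolding universally_null_def
proof (intro conjI ballI)
  show "{x} \<in> sets borel" by simp
  fix \<mu> assume \<mu>: "\<mu> \<in> invariant_measures h"
  note \<mu>D = invariant_measuresD[OF \<mu>]
  interpret prob_space \<mu> by (rule \<mu>D(2))
  define p where "p k = (h ^^ k) x" for k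
  have "inj p" unfolding p_def by (rule minimal_map_inj_orbit[OF assms(1,3)])
  have "measure \<mu> {p (Suc k)} = measure \<mu> {p k}" for k
  proof -
    have "h -` {p (Suc k)} = {p k}" using assms(2) unfolding p_def by (auto simp: inj_eq)
    then show ?thesis using \<mu>D(3)[of "{p (Suc k)}"] by (simp add: measure_def)
  qed
  then have orbit_measure: "measure \<mu> {p k} = measure \<mu> {x}" for k
    by (induction k) (simp_all add: p_def)
  have bound: "real N * measure \<mu> {x} \<le> 1" for N
  proof -
    have "real N * measure \<mu> {x} = (\<Sum>y\<in>p ` {..<N}. measure \<mu> {y})"
      using \<open>inj p\<close> orbit_measure by (simp add: sum.reindex inj_on_subset)
    also have "\<dots> = measure \<mu> (p ` {..<N})"
      by (rule finite_measure_eq_sum_singleton[symmetric]) (use \<mu>D(1) in auto)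
    also have "\<dots> \<le> 1" by (rule prob_le_1)
    finally show ?thesis .
  qed
  have "measure \<mu> {x} \<le> 0"
  proof (rule ccontr)
    assume "\<not> measure \<mu> {x} \<le> 0"
    moreover obtain N where "1 / measure \<mu> {x} < real N" using reals_Archimedean2 by blast
    ultimately have "1 < real N * measure \<mu> {x}" by (simp add: field_simps)
    then show False using bound[of N] by simp
  qed
  then show "emeasure \<mu> {x} = 0" using measure_nonneg[of \<mu> "{x}"] by (simp add: emeasure_eq_measure)
qed

theorem lemma2p4:
  fixes h :: "'a::metric_space \<Rightarrow> 'a" and F :: "'a set" and \<epsilon> :: real
  assumes "compact (UNIV :: 'a set)"
    and "infinite (UNIV :: 'a set)"
    and "\<exists>g. homeomorphism UNIV UNIV h g"
    and "minimal_map h"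
    and "\<epsilon> > 0"
    and "closed F"
    and "universally_null h F"
  shows "\<exists>E. open E \<and> E \<noteq> {} \<and> F \<subseteq> E \<and>
             (\<forall>\<mu>\<in>invariant_measures h. emeasure \<mu> E < ennreal \<epsilon>)"
proof -
  obtain g where hg: "homeomorphism UNIV UNIV h g" using assms(3) ..
  then have h: "continuous_on UNIV h" "inj h"
    by (auto simp: homeomorphism_def intro: inj_on_inverseI[of UNIV g] homeomorphism_apply1[OF hg])
  define F' where "F' = (if F = {} then {undefined} else F)"
  have F': "closed F'" "F' \<noteq> {}" "universally_null h F'" and "F \<subseteq> F'"
    using assms(6,7) universally_null_singleton[OF assms(2) h(2) assms(4)] by (auto simp: F'_def)
  obtain E where "open E" "F' \<subseteq> E" "\<forall>\<mu>\<in>invariant_measures h. emeasure \<mu> E < ennreal \<epsilon>"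
    using closed_universally_null_small_nbhd[OF assms(1) h(1) assms(5) F'] by blast
  with \<open>F \<subseteq> F'\<close> \<open>F' \<noteq> {}\<close> show ?thesis by blast
qed

end
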